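(* Let $P$ be a poset and let $\overline{down(P)}$ denote the topological closure of $down(P)=\{\downarrow x: x\in P\}$ in $\mathfrak{P}(P)$. Then $\emptyset\notin\overline{down(P)}$ if and only if $P$ is a finitely generated final segment of itself, i.e. $P=\uparrow F:=\{y\in P: f\leq y \text{ for some } f\in F\}$ for some finite $F\subseteq P$.
   Context: $\mathfrak{P}(P)$ is the power set of $P$ with the topology whose basic open sets are $O(F,G)=\{X\subseteq P: F\subseteq X,\ G\cap X=\emptyset\}$ for finite $F,G\subseteq P$. $\downarrow x=\{y\in P:y\leq x\}$. *)

theory Defs
  imports "HOL-Analysis.Analysis"
begin

definition basic_open :: "'a set \<Rightarrow> 'a set \<Rightarrow> 'a set \<Rightarrow> 'a set set" where
  "basic_open P F G = {X. X \<subseteq> P \<and> F \<subseteq> X \<and> G \<inter> X = {}}"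

definition powerset_topology :: "'a set \<Rightarrow> 'a set topology" where
  "powerset_topology P = topology_generated_by
     {basic_open P F G | F G. finite F \<and> finite G \<and> F \<subseteq> P \<and> G \<subseteq> P}"

definition down_set :: "'a set \<Rightarrow> ('a \<Rightarrow> 'a \<Rightarrow> bool) \<Rightarrow> 'a \<Rightarrow> 'a set" where
  "down_set P le x = {y \<in> P. le y x}"

definition up_set :: "'a set \<Rightarrow> ('a \<Rightarrow> 'a \<Rightarrow> bool) \<Rightarrow> 'a set \<Rightarrow> 'a set" where
  "up_set P le F = {y \<in> P. \<exists>f\<in>F. le f y}"

definition down_P :: "'a set \<Rightarrow> ('a \<Rightarrow> 'a \<Rightarrow> bool) \<Rightarrow> 'a set set" where
  "down_P P le = down_set P le ` P"

definition is_poset :: "'a set \<Rightarrow> ('a \<Rightarrow> 'a \<Rightarrow> bool) \<Rightarrow> bool" where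
  "is_poset P le \<longleftrightarrow> (\<forall>x\<in>P. le x x) \<and>
     (\<forall>x\<in>P. \<forall>y\<in>P. le x y \<and> le y x \<longrightarrow> x = y) \<and>
     (\<forall>x\<in>P. \<forall>y\<in>P. \<forall>z\<in>P. le x y \<and> le y z \<longrightarrow> le x z)"

end

theory Submission
  imports Defs
begin

text \<open>The basic open sets O(F,G) form a neighbourhood base at every point, so the empty set
  lies in the closure of a family S exactly when every O({},G) meets S, i.e. when for every
  finite G some member of S misses G. For S = down(P), a down-set of x misses G iff x is
  not above any element of G, so this says that no finite G generates P as a final segment.\<close>

lemma basic_open_Int:
  "basic_open P F1 G1 \<inter> basic_open P F2 G2 = basic_open P (F1 \<union> F2) (G1 \<union> G2)"
  unfolding basic_open_def by blast

lemma openin_powerset_topology_basic_open: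
  assumes "finite F" "finite G" "F \<subseteq> P" "G \<subseteq> P"
  shows "openin (powerset_topology P) (basic_open P F G)"
  unfolding powerset_topology_def
  by (rule topology_generated_by_Basis) (use assms in blast)

lemma topspace_powerset_topology: "topspace (powerset_topology P) = Pow P"
proof -
  have "basic_open P {} {} = Pow P"
    by (auto simp: basic_open_def)
  moreover have "basic_open P F G \<subseteq> Pow P" for F G
    by (auto simp: basic_open_def)
  ultimately show ?thesis
    unfolding powerset_topology_def topology_generated_by_topspace by blast
qed

lemma openin_powerset_topology_basic_open_nhds:
  assumes "openin (powerset_topology P) U" "X \<in> U"
  shows "\<exists>F G. finite F \<and> finite G \<and> F \<subseteq> P \<and> G \<subseteq> P \<and>
           X \<in> basic_open P F G \<and> basic_open P F G \<subseteq> U"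
proof -
  have "generate_topology_on
     {basic_open P F G | F G. finite F \<and> finite G \<and> F \<subseteq> P \<and> G \<subseteq> P} U"
    using assms(1) unfolding powerset_topology_def openin_topology_generated_by_iff .
  then show ?thesis
    using assms(2)
  proof (induction arbitrary: X rule: generate_topology_on.induct)
    case Empty
    then show ?case by simp
  next
    case (Int U1 U2)
    obtain F1 G1 where "finite F1" "finite G1" "F1 \<subseteq> P" "G1 \<subseteq> P"
      "X \<in> basic_open P F1 G1" "basic_open P F1 G1 \<subseteq> U1"
      using Int.IH(1) Int.prems by (meson IntD1)
    moreover obtain F2 G2 where "finite F2" "finite G2" "F2 \<subseteq> P" "G2 \<subseteq> P"
      "X \<in> basic_open P F2 G2" "basic_open P F2 G2 \<subseteq> U2"
      using Int.IH(2) Int.prems by (meson IntD2)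
    ultimately have "X \<in> basic_open P (F1 \<union> F2) (G1 \<union> G2)"
      "basic_open P (F1 \<union> F2) (G1 \<union> G2) \<subseteq> U1 \<inter> U2"
      "finite (F1 \<union> F2)" "finite (G1 \<union> G2)" "F1 \<union> F2 \<subseteq> P" "G1 \<union> G2 \<subseteq> P"
      unfolding basic_open_Int[symmetric] by auto
    then show ?case
      by meson
  next
    case (UN K)
    then obtain U where "U \<in> K" "X \<in> U" by blast
    with UN.IH show ?case
      by (meson Union_upper order_trans)
  next
    case (Basis U)
    then obtain F G where "U = basic_open P F G" "finite F" "finite G" "F \<subseteq> P" "G \<subseteq> P"
      by blast
    with Basis.prems show ?case
      by auto
  qed
qed

lemma empty_in_powerset_closure_of_iff:
  "{} \<in> (powerset_topology P) closure_of S \<longleftrightarrow>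
     (\<forall>G. finite G \<and> G \<subseteq> P \<longrightarrow> (\<exists>Y\<in>S. Y \<subseteq> P \<and> G \<inter> Y = {}))"
proof
  assume closure: "{} \<in> (powerset_topology P) closure_of S"
  show "\<forall>G. finite G \<and> G \<subseteq> P \<longrightarrow> (\<exists>Y\<in>S. Y \<subseteq> P \<and> G \<inter> Y = {})"
  proof (intro allI impI)
    fix G assume "finite G \<and> G \<subseteq> P"
    then have "openin (powerset_topology P) (basic_open P {} G)"
      by (simp add: openin_powerset_topology_basic_open)
    moreover have "{} \<in> basic_open P {} G"
      by (simp add: basic_open_def)
    ultimately obtain Y where "Y \<in> S" "Y \<in> basic_open P {} G"
      using closure unfolding in_closure_of by blast
    then show "\<exists>Y\<in>S. Y \<subseteq> P \<and> G \<inter> Y = {}"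
      unfolding basic_open_def by blast
  qed
next
  assume meets: "\<forall>G. finite G \<and> G \<subseteq> P \<longrightarrow> (\<exists>Y\<in>S. Y \<subseteq> P \<and> G \<inter> Y = {})"
  show "{} \<in> (powerset_topology P) closure_of S"
    unfolding in_closure_of topspace_powerset_topology
  proof (intro conjI allI impI)
    fix U assume U: "{} \<in> U \<and> openin (powerset_topology P) U"
    then obtain F G where "finite G" "G \<subseteq> P" "{} \<in> basic_open P F G" "basic_open P F G \<subseteq> U"
      using openin_powerset_topology_basic_open_nhds by meson
    moreover from this obtain Y where "Y \<in> S" "Y \<subseteq> P" "G \<inter> Y = {}"
      using meets by meson
    ultimately have "Y \<in> basic_open P F G"
      by (simp add: basic_open_def)
    then show "\<exists>Y. Y \<in> S \<and> Y \<in> U"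
      using \<open>Y \<in> S\<close> \<open>basic_open P F G \<subseteq> U\<close> by blast
  qed simp
qed

lemma down_P_disjoint_iff:
  assumes "F \<subseteq> P"
  shows "(\<exists>Y\<in>down_P P le. Y \<subseteq> P \<and> F \<inter> Y = {}) \<longleftrightarrow> up_set P le F \<noteq> P"
proof -
  have "(\<exists>Y\<in>down_P P le. Y \<subseteq> P \<and> F \<inter> Y = {}) \<longleftrightarrow> (\<exists>x\<in>P. F \<inter> down_set P le x = {})"
    unfolding down_P_def by (auto simp: down_set_def)
  also have "\<dots> \<longleftrightarrow> (\<exists>x\<in>P. x \<notin> up_set P le F)"
    using assms unfolding down_set_def up_set_def by auto
  also have "\<dots> \<longleftrightarrow> up_set P le F \<noteq> P"
    unfolding up_set_def by auto
  finally show ?thesis .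
qed

theorem lemma3p1:
  fixes P :: "'a set" and le :: "'a \<Rightarrow> 'a \<Rightarrow> bool"
  assumes "is_poset P le"
  shows "{} \<notin> (powerset_topology P) closure_of (down_P P le) \<longleftrightarrow>
         (\<exists>F. finite F \<and> F \<subseteq> P \<and> P = up_set P le F)"
proof -
  have "{} \<in> (powerset_topology P) closure_of (down_P P le) \<longleftrightarrow>
        (\<forall>F. finite F \<and> F \<subseteq> P \<longrightarrow> up_set P le F \<noteq> P)"
    by (simp add: empty_in_powerset_closure_of_iff down_P_disjoint_iff)
  then show ?thesis
    by (simp add: eq_commute[of P])
qed

end
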